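(* Let $\alpha,\alpha'\in(0,1)$ with $\alpha>\alpha'$, and let $\mathcal M_\alpha$ and $\mathcal M_{\alpha'}$ denote the sets of mechanisms that are undominated with respect to $\mathrm{RS}_\alpha$ and $\mathrm{RS}_{\alpha'}$ respectively. Then $\mathcal M_{\alpha'}\subseteq\mathcal M_\alpha$.
   Context: Setting. Let $\Theta=[\underline\theta,\overline\theta]$ with $0<\underline\theta<\overline\theta$. Let $c>0$ and let $P:\mathbb R_+\to\mathbb R_+$ be continuous and strictly decreasing with $P(\overline q)=0$ for some $\overline q>0$. Put $V(q)=\int_0^q P(z)\,dz$ and $\mathrm{TS}(\theta,q)=V(q)-c-\theta q$ for $q>0$, $\mathrm{TS}(\theta,0)=0$. Assume (A2): $\mathrm{TS}(\overline\theta,P^{-1}(\overline\theta))>0$. A mechanism is a triple $M=(r,q,u)$ of functions $r:\Theta\to[0,1]$, $q:\Theta\to[0,\overline q]$, $u:\Theta\to\mathbb R$ with $q(\theta)=0$ if and only if $r(\theta)=0$. It is IC if $u(\theta)\ge u(\theta')+(\theta'-\theta)q(\theta')r(\theta')$ for all $\theta,\theta'\in\Theta$, and IR if $u(\theta)\ge 0$ for all $\theta$. (Known fact: $M$ is IC iff $\theta\mapsto q(\theta)r(\theta)$ is nonincreasing and $u(\theta)=u(\overline\theta)+\int_\theta^{\overline\theta}q(z)r(z)\,dz$ for all $\theta$; an IC mechanism is IR iff $u(\overline\theta)\ge0$.) For a weight $\beta\in[0,1)$, the regulator's surplus at $\theta$ is $\mathrm{RS}_\beta(\theta,M)=r(\theta)\,\mathrm{TS}(\theta,q(\theta))-(1-\beta)u(\theta)$.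 An IC and IR mechanism $\tilde M$ dominates an IC and IR mechanism $M$ with respect to $\mathrm{RS}_\beta$ if $\mathrm{RS}_\beta(\theta,\tilde M)\ge \mathrm{RS}_\beta(\theta,M)$ for all $\theta\in\Theta$ with strict inequality for some $\theta$; $M$ is undominated (w.r.t. $\mathrm{RS}_\beta$) if it is IC, IR and not dominated in this sense by any IC and IR mechanism. *)

theory Defs
  imports "HOL-Analysis.Analysis"
begin

text \<open>Type parameter space Theta = {lo..hi}. A mechanism is a triple (r, q, u) of
  real functions; only their values on Theta matter.\<close>

type_synonym mech = "(real \<Rightarrow> real) \<times> (real \<Rightarrow> real) \<times> (real \<Rightarrow> real)"

definition V :: "(real \<Rightarrow> real) \<Rightarrow> real \<Rightarrow> real" where
  "V P q = integral {0..q} P"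

definition TS :: "(real \<Rightarrow> real) \<Rightarrow> real \<Rightarrow> real \<Rightarrow> real \<Rightarrow> real" where
  "TS P c \<theta> q = (if q = 0 then 0 else V P q - c - \<theta> * q)"

definition is_mechanism :: "real \<Rightarrow> real \<Rightarrow> real \<Rightarrow> mech \<Rightarrow> bool" where
  "is_mechanism lo hi qbar M = (case M of (r, q, u) \<Rightarrow>
     (\<forall>\<theta>\<in>{lo..hi}. r \<theta> \<in> {0..1} \<and> q \<theta> \<in> {0..qbar} \<and> (q \<theta> = 0 \<longleftrightarrow> r \<theta> = 0)))"

definition IC :: "real \<Rightarrow> real \<Rightarrow> mech \<Rightarrow> bool" where
  "IC lo hi M = (case M of (r, q, u) \<Rightarrow>
     (\<forall>\<theta>\<in>{lo..hi}. \<forall>\<theta>'\<in>{lo..hi}. u \<theta> \<ge> u \<theta>' + (\<theta>' - \<theta>) * q \<theta>' * r \<theta>'))"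

definition IR :: "real \<Rightarrow> real \<Rightarrow> mech \<Rightarrow> bool" where
  "IR lo hi M = (case M of (r, q, u) \<Rightarrow> (\<forall>\<theta>\<in>{lo..hi}. u \<theta> \<ge> 0))"

definition admissible :: "real \<Rightarrow> real \<Rightarrow> real \<Rightarrow> mech \<Rightarrow> bool" where
  "admissible lo hi qbar M = (is_mechanism lo hi qbar M \<and> IC lo hi M \<and> IR lo hi M)"

definition RS :: "(real \<Rightarrow> real) \<Rightarrow> real \<Rightarrow> real \<Rightarrow> real \<Rightarrow> mech \<Rightarrow> real" where
  "RS P c \<beta> \<theta> M = (case M of (r, q, u) \<Rightarrow> r \<theta> * TS P c \<theta> (q \<theta>) - (1 - \<beta>) * u \<theta>)"

definition dominates ::
  "(real \<Rightarrow> real) \<Rightarrow> real \<Rightarrow> real \<Rightarrow> real \<Rightarrow> real \<Rightarrow> real \<Rightarrow> mech \<Rightarrow> mech \<Rightarrow> bool" where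
  "dominates P c lo hi qbar \<beta> M' M =
     (admissible lo hi qbar M' \<and> admissible lo hi qbar M \<and>
      (\<forall>\<theta>\<in>{lo..hi}. RS P c \<beta> \<theta> M' \<ge> RS P c \<beta> \<theta> M) \<and>
      (\<exists>\<theta>\<in>{lo..hi}. RS P c \<beta> \<theta> M' > RS P c \<beta> \<theta> M))"

definition undominated ::
  "(real \<Rightarrow> real) \<Rightarrow> real \<Rightarrow> real \<Rightarrow> real \<Rightarrow> real \<Rightarrow> real \<Rightarrow> mech \<Rightarrow> bool" where
  "undominated P c lo hi qbar \<beta> M =
     (admissible lo hi qbar M \<and> \<not> (\<exists>M'. dominates P c lo hi qbar \<beta> M' M))"

end

theory Submission
  imports Defs
begin

text \<open>Let M be undominated for \<alpha>' and suppose M' dominates M for \<alpha> > \<alpha>'. Passing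
  from \<alpha> to \<alpha>' changes each regulator surplus difference by (\<alpha> - \<alpha>') (u - u'), so
  if M' gives no type more utility than M, then M' dominates M for \<alpha>' as well. Otherwise
  replace M' by a type-dependent lottery between M and M' with probability s (u' - u) on
  M', paying M's utility plus h (u' - u), where h is a convex power function of the positive
  part, of degree n > (1 - \<alpha>') / (1 - \<alpha>), and s its derivative. Convexity of h keeps the
  lottery incentive compatible and concavity of V makes its surplus at least the mixture
  of the two surpluses. Since (1 - \<alpha>) s(x) x = n (1 - \<alpha>) h(x) exceeds the extra rent
  (1 - \<alpha>') h(x) for x > 0, the lottery dominates M for \<alpha>'. Only continuity and strict
  decrease of P (for the concavity of V) and \<alpha> < 1 enter the argument.\<close>

lemma concave_on_V:
  fixes P :: "real \<Rightarrow> real"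
  assumes cont: "continuous_on {0..} P"
    and dec: "\<And>x y. 0 \<le> x \<Longrightarrow> x < y \<Longrightarrow> P y < P x"
  shows "concave_on {0<..} (V P)"
  unfolding concave_on_def
proof (rule convex_on_realI[where f' = "\<lambda>z. - P z"])
  fix z :: real assume z: "z \<in> {0<..}"
  have "continuous_on {0..z+1} P" using cont by (rule continuous_on_subset) auto
  from integral_has_real_derivative[OF this, of z] z
  have "((\<lambda>x. integral {0..x} P) has_real_derivative P z) (at z)"
    by (simp add: at_within_Icc_at)
  then show "((\<lambda>x. - V P x) has_real_derivative - P z) (at z)"
    unfolding V_def by (intro derivative_intros)
next
  fix x y :: real assume "x \<in> {0<..}" "x \<le> y"
  then show "- P x \<le> - P y" using dec[of x y] by (cases "x = y") auto
qed simp

lemma concave_on_weighted_mean: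
  fixes f :: "real \<Rightarrow> real"
  assumes "concave_on {0<..} f"
    and "0 \<le> a" "0 \<le> b" "0 < a + b"
    and "0 < a \<Longrightarrow> 0 < x" "0 < b \<Longrightarrow> 0 < y"
  shows "a * f x + b * f y \<le> (a + b) * f ((a * x + b * y) / (a + b))"
proof (cases "a = 0 \<or> b = 0")
  case True
  then show ?thesis using assms(2-4) by auto
next
  case False
  define t where "t = b / (a + b)"
  have t: "0 \<le> t" "t \<le> 1" "1 - t = a / (a + b)"
    using assms(2-4) by (auto simp: t_def field_simps)
  have "(1 - t) * f x + t * f y \<le> f ((1 - t) * x + t * y)"
    using concave_onD[OF assms(1) t(1,2), of x y] False assms(2,3,5,6) by auto
  then have "(a + b) * ((1 - t) * f x + t * f y) \<le> (a + b) * f ((1 - t) * x + t * y)"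
    using assms(4) by simp
  moreover have "(1 - t) * x + t * y = (a * x + b * y) / (a + b)"
    using t(3) unfolding t_def by (simp add: add_divide_distrib)
  moreover have "(a + b) * (1 - t) = a" "(a + b) * t = b"
    using t(3) assms(4) by (simp_all add: t_def)
  ultimately show ?thesis by (metis distrib_left mult.assoc)
qed

lemma power_subgradient:
  fixes a b :: real
  assumes "0 < a" "0 \<le> b"
  shows "real n * a ^ (n - 1) * (b - a) \<le> b ^ n - a ^ n"
proof -
  have "a ^ n * (1 + real n * (b / a - 1)) \<le> a ^ n * (1 + (b / a - 1)) ^ n"
    using assms by (intro mult_left_mono Bernoulli_inequality) auto
  moreover have "a ^ n * (1 + (b / a - 1)) ^ n = b ^ n"
    using assms by (simp add: power_divide)
  moreover have "a ^ n * (1 + real n * (b / a - 1)) = a ^ n + real n * a ^ (n - 1) * (b - a)"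
    using assms by (cases n) (simp_all add: field_simps)
  ultimately show ?thesis by simp
qed

lemma pos_part_power_subgradient:
  fixes x y :: real
  assumes "2 \<le> n"
  shows "real n * max x 0 ^ (n - 1) * (y - x) \<le> max y 0 ^ n - max x 0 ^ n"
proof (cases "x \<le> 0")
  case True
  then show ?thesis using assms by (cases "n - 1") auto
next
  case False
  have "real n * x ^ (n - 1) * (y - x) \<le> real n * x ^ (n - 1) * (max y 0 - x)"
    using False by (intro mult_left_mono) auto
  also have "\<dots> \<le> max y 0 ^ n - x ^ n"
    using power_subgradient[of x "max y 0" n] False by auto
  finally show ?thesis using False by simp
qed

lemma pos_part_power_times:
  fixes x :: real
  assumes "2 \<le> n"
  shows "max x 0 ^ (n - 1) * x = max x 0 ^ n"
  using assms by (cases "x \<le> 0"; cases n) auto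

lemma convex_penalty_exists:
  fixes B \<kappa> :: real
  assumes "0 < B"
  obtains s h :: "real \<Rightarrow> real" where
    "\<And>x y. s x * (y - x) \<le> h y - h x" "\<And>x. 0 \<le> h x"
    "\<And>x. x \<le> B \<Longrightarrow> 0 \<le> s x \<and> s x \<le> 1"
    "\<And>x. \<kappa> * h x \<le> s x * x" "\<And>x. 0 < x \<Longrightarrow> \<kappa> * h x < s x * x"
proof -
  obtain n0 :: nat where "\<kappa> < real n0" using reals_Archimedean2 by blast
  define n where "n = n0 + 2"
  have n: "2 \<le> n" "\<kappa> < real n" using \<open>\<kappa> < real n0\<close> by (auto simp: n_def)
  define c0 where "c0 = 1 / (real n * B ^ (n - 1))"
  have c0: "0 < c0" using assms n by (simp add: c0_def)
  define h where "h x = c0 * max x 0 ^ n" for x :: real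
  define s where "s x = c0 * real n * max x 0 ^ (n - 1)" for x :: real
  have sx: "s x * x = real n * h x" for x
    using pos_part_power_times[OF n(1), of x] by (simp add: s_def h_def)
  show ?thesis
  proof
    fix x y :: real
    show "s x * (y - x) \<le> h y - h x"
      using mult_left_mono[OF pos_part_power_subgradient[OF n(1), of x y], of c0] c0
      by (simp add: s_def h_def algebra_simps)
  next
    fix x :: real
    show "0 \<le> h x" using c0 by (simp add: h_def)
    then show "\<kappa> * h x \<le> s x * x" using n(2) sx by (simp add: mult_right_mono)
  next
    fix x :: real assume "x \<le> B"
    then have "max x 0 ^ (n - 1) \<le> B ^ (n - 1)" using assms by (intro power_mono) auto
    then have "s x \<le> c0 * real n * B ^ (n - 1)"
      using c0 by (simp add: s_def mult_left_mono)
    then show "0 \<le> s x \<and> s x \<le> 1" using c0 assms n by (simp add: s_def c0_def)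
  next
    fix x :: real assume "0 < x"
    then have "0 < h x" using c0 by (simp add: h_def)
    then show "\<kappa> * h x < s x * x" using n(2) sx by simp
  qed
qed

definition feasible_alloc :: "real \<Rightarrow> real \<Rightarrow> real \<Rightarrow> bool" where
  "feasible_alloc qbar r q \<longleftrightarrow> r \<in> {0..1} \<and> q \<in> {0..qbar} \<and> (q = 0 \<longleftrightarrow> r = 0)"

lemma is_mechanism_iff:
  "is_mechanism lo hi qbar (r, q, u) \<longleftrightarrow> (\<forall>\<theta>\<in>{lo..hi}. feasible_alloc qbar (r \<theta>) (q \<theta>))"
  by (simp add: is_mechanism_def feasible_alloc_def)

definition mix_rate :: "real \<Rightarrow> real \<Rightarrow> real \<Rightarrow> real" where
  "mix_rate l r r' = (1 - l) * r + l * r'"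

definition mix_quantity :: "real \<Rightarrow> real \<Rightarrow> real \<Rightarrow> real \<Rightarrow> real \<Rightarrow> real" where
  "mix_quantity l r q r' q' =
     (if mix_rate l r r' = 0 then 0 else ((1 - l) * r * q + l * r' * q') / mix_rate l r r')"

text \<open>Type \<theta> is served according to the second mechanism with probability l \<theta> and
  according to the first one otherwise, and gets utility w \<theta>.\<close>

fun mix_mech :: "(real \<Rightarrow> real) \<Rightarrow> (real \<Rightarrow> real) \<Rightarrow> mech \<Rightarrow> mech \<Rightarrow> mech" where
  "mix_mech l w (r, q, u) (r', q', u') =
     (\<lambda>\<theta>. mix_rate (l \<theta>) (r \<theta>) (r' \<theta>), \<lambda>\<theta>. mix_quantity (l \<theta>) (r \<theta>) (q \<theta>) (r' \<theta>) (q' \<theta>), w)"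

lemma mix_rate_eq_0_iff:
  assumes "l \<in> {0..1}" "0 \<le> r" "0 \<le> r'"
  shows "mix_rate l r r' = 0 \<longleftrightarrow> (1 - l) * r = 0 \<and> l * r' = 0"
  using assms by (auto simp: mix_rate_def add_nonneg_eq_0_iff)

lemma mix_quantity_times_rate:
  assumes "l \<in> {0..1}" "0 \<le> r" "0 \<le> r'"
  shows "mix_quantity l r q r' q' * mix_rate l r r' = (1 - l) * (q * r) + l * (q' * r')"
  using mix_rate_eq_0_iff[OF assms] by (auto simp: mix_quantity_def)

lemma feasible_alloc_mix:
  assumes "feasible_alloc qbar r q" "feasible_alloc qbar r' q'" "l \<in> {0..1}"
  shows "feasible_alloc qbar (mix_rate l r r') (mix_quantity l r q r' q')"
proof -
  let ?R = "mix_rate l r r'" and ?N = "(1 - l) * r * q + l * r' * q'"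
  have rate: "?R \<in> {0..1}"
    using assms by (auto simp: feasible_alloc_def mix_rate_def convex_bound_le)
  moreover have "0 < ?N \<and> ?N \<le> ?R * qbar" if "?R \<noteq> 0"
  proof -
    have "0 < (1 - l) * r * q \<or> 0 < l * r' * q'"
      using that assms mix_rate_eq_0_iff[OF assms(3)]
      by (fastforce simp: feasible_alloc_def)
    moreover have "0 \<le> (1 - l) * r * q" "0 \<le> l * r' * q'"
      using assms by (auto simp: feasible_alloc_def)
    moreover have "(1 - l) * r * q \<le> (1 - l) * r * qbar" "l * r' * q' \<le> l * r' * qbar"
      using assms by (auto simp: feasible_alloc_def intro!: mult_left_mono)
    moreover have "?R * qbar = (1 - l) * r * qbar + l * r' * qbar"
      by (simp add: mix_rate_def algebra_simps)
    ultimately show ?thesis by linarith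
  qed
  ultimately show ?thesis
    using assms(1) by (auto simp: feasible_alloc_def mix_quantity_def field_simps)
qed

lemma mix_surplus_ge:
  assumes "concave_on {0<..} (V P)"
    and "feasible_alloc qbar r q" "feasible_alloc qbar r' q'" "l \<in> {0..1}"
  shows "(1 - l) * (r * TS P c \<theta> q) + l * (r' * TS P c \<theta> q')
           \<le> mix_rate l r r' * TS P c \<theta> (mix_quantity l r q r' q')"
proof -
  let ?a = "(1 - l) * r" and ?b = "l * r'"
  let ?R = "mix_rate l r r'" and ?Q = "mix_quantity l r q r' q'"
  have ts: "x * TS P c \<theta> y = x * (V P y - c - \<theta> * y)" if "feasible_alloc qbar x y" for x y
    using that by (simp add: feasible_alloc_def TS_def)
  have ab: "0 \<le> ?a" "0 \<le> ?b" "?R = ?a + ?b"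
    using assms(2-4) by (auto simp: feasible_alloc_def mix_rate_def)
  show ?thesis
  proof (cases "?R = 0")
    case True
    then have "?a = 0" "?b = 0" using ab by linarith+
    then show ?thesis
      using True by (simp only: mult.assoc[symmetric] mult_zero_left add_0 order_refl)
  next
    case False
    have "?a * V P q + ?b * V P q' \<le> ?R * V P ?Q"
      using concave_on_weighted_mean[OF assms(1) ab(1,2), of q q'] ab False assms(2,3)
      by (fastforce simp: feasible_alloc_def mix_quantity_def)
    moreover have "\<theta> * (?R * ?Q) = \<theta> * (?a * q + ?b * q')"
      using False by (simp add: mix_quantity_def)
    moreover have "(1 - l) * (r * TS P c \<theta> q) + l * (r' * TS P c \<theta> q')
        = (?a * V P q + ?b * V P q') - c * ?R - \<theta> * (?a * q + ?b * q')"
      by (simp only: ts[OF assms(2)] ts[OF assms(3)] ab(3)) (simp add: algebra_simps)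
    moreover have "?R * TS P c \<theta> ?Q = ?R * V P ?Q - c * ?R - \<theta> * (?R * ?Q)"
      by (simp only: ts[OF feasible_alloc_mix[OF assms(2-4)]]) (simp add: algebra_simps)
    ultimately show ?thesis by linarith
  qed
qed

lemma admissible_mix_mech:
  assumes adm: "admissible lo hi qbar (r, q, u)" "admissible lo hi qbar (r', q', u')"
    and l: "\<And>\<theta>. \<theta> \<in> {lo..hi} \<Longrightarrow> l \<theta> \<in> {0..1}"
    and w_nonneg: "\<And>\<theta>. \<theta> \<in> {lo..hi} \<Longrightarrow> 0 \<le> w \<theta>"
    and w_incr: "\<And>\<theta> \<theta>'. \<theta> \<in> {lo..hi} \<Longrightarrow> \<theta>' \<in> {lo..hi} \<Longrightarrow>
      (1 - l \<theta>') * (u \<theta> - u \<theta>') + l \<theta>' * (u' \<theta> - u' \<theta>') \<le> w \<theta> - w \<theta>'"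
  shows "admissible lo hi qbar (mix_mech l w (r, q, u) (r', q', u'))"
proof -
  have feas: "feasible_alloc qbar (r \<theta>) (q \<theta>)" "feasible_alloc qbar (r' \<theta>) (q' \<theta>)"
    if "\<theta> \<in> {lo..hi}" for \<theta>
    using adm that by (auto simp: admissible_def is_mechanism_iff)
  have "w \<theta>' + (\<theta>' - \<theta>) * mix_quantity (l \<theta>') (r \<theta>') (q \<theta>') (r' \<theta>') (q' \<theta>')
          * mix_rate (l \<theta>') (r \<theta>') (r' \<theta>') \<le> w \<theta>"
    if th: "\<theta> \<in> {lo..hi}" "\<theta>' \<in> {lo..hi}" for \<theta> \<theta>'
  proof -
    have "u \<theta>' + (\<theta>' - \<theta>) * q \<theta>' * r \<theta>' \<le> u \<theta>" "u' \<theta>' + (\<theta>' - \<theta>) * q' \<theta>' * r' \<theta>' \<le> u' \<theta>"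
      using adm th unfolding admissible_def IC_def by auto
    then have "(1 - l \<theta>') * ((\<theta>' - \<theta>) * q \<theta>' * r \<theta>') + l \<theta>' * ((\<theta>' - \<theta>) * q' \<theta>' * r' \<theta>')
        \<le> (1 - l \<theta>') * (u \<theta> - u \<theta>') + l \<theta>' * (u' \<theta> - u' \<theta>')"
      using l[OF th(2)] by (intro add_mono mult_left_mono) (auto simp: algebra_simps)
    moreover have QR: "mix_quantity (l \<theta>') (r \<theta>') (q \<theta>') (r' \<theta>') (q' \<theta>') * mix_rate (l \<theta>') (r \<theta>') (r' \<theta>')
        = (1 - l \<theta>') * (q \<theta>' * r \<theta>') + l \<theta>' * (q' \<theta>' * r' \<theta>')"
      using mix_quantity_times_rate l[OF th(2)] feas[OF th(2)] by (simp add: feasible_alloc_def)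
    ultimately show ?thesis
      unfolding mult.assoc QR using w_incr[OF th] by (simp add: algebra_simps)
  qed
  then show ?thesis
    using feas l w_nonneg feasible_alloc_mix
    by (simp add: admissible_def is_mechanism_iff IC_def IR_def mult.assoc)
qed

lemma RS_mix_mech_ge:
  assumes "concave_on {0<..} (V P)"
    and "is_mechanism lo hi qbar (r, q, u)" "is_mechanism lo hi qbar (r', q', u')"
    and "l \<theta> \<in> {0..1}" "\<theta> \<in> {lo..hi}"
  shows "(1 - l \<theta>) * (r \<theta> * TS P c \<theta> (q \<theta>)) + l \<theta> * (r' \<theta> * TS P c \<theta> (q' \<theta>)) - (1 - \<beta>) * w \<theta>
           \<le> RS P c \<beta> \<theta> (mix_mech l w (r, q, u) (r', q', u'))"
proof -
  have "feasible_alloc qbar (r \<theta>) (q \<theta>)" "feasible_alloc qbar (r' \<theta>) (q' \<theta>)"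
    using assms(2,3,5) by (auto simp: is_mechanism_iff)
  from mix_surplus_ge[OF assms(1) this assms(4), of c \<theta>] show ?thesis
    by (simp add: RS_def)
qed

lemma RS_weight_change: "RS P c \<beta>' \<theta> (r, q, u) = RS P c \<beta> \<theta> (r, q, u) + (\<beta>' - \<beta>) * u \<theta>"
  by (simp add: RS_def algebra_simps)

lemma dominates_lower_weight:
  assumes "dominates P c lo hi qbar \<beta> (r', q', u') (r, q, u)" "\<beta>' \<le> \<beta>"
    and "\<And>\<theta>. \<theta> \<in> {lo..hi} \<Longrightarrow> u' \<theta> \<le> u \<theta>"
  shows "dominates P c lo hi qbar \<beta>' (r', q', u') (r, q, u)"
proof -
  have "RS P c \<beta> \<theta> (r', q', u') - RS P c \<beta> \<theta> (r, q, u)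
      \<le> RS P c \<beta>' \<theta> (r', q', u') - RS P c \<beta>' \<theta> (r, q, u)" if "\<theta> \<in> {lo..hi}" for \<theta>
    using mult_left_mono_neg[OF assms(3)[OF that], of "\<beta>' - \<beta>"] assms(2)
    unfolding RS_weight_change[of _ _ \<beta>' _ r' q' u' \<beta>] RS_weight_change[of _ _ \<beta>' _ r q u \<beta>]
    by simp
  moreover obtain \<theta>0 where "\<theta>0 \<in> {lo..hi}" "RS P c \<beta> \<theta>0 (r, q, u) < RS P c \<beta> \<theta>0 (r', q', u')"
    using assms(1) unfolding dominates_def by blast
  ultimately show ?thesis
    using assms(1) unfolding dominates_def by (smt (verit, best))
qed

lemma admissible_utility_nonneg:
  "admissible lo hi qbar (r, q, u) \<Longrightarrow> \<theta> \<in> {lo..hi} \<Longrightarrow> 0 \<le> u \<theta>"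
  by (simp add: admissible_def IR_def)

lemma admissible_utility_le:
  assumes "admissible lo hi qbar (r, q, u)" "\<theta> \<in> {lo..hi}"
  shows "u \<theta> \<le> u hi + (hi - lo) * qbar"
proof -
  have "u \<theta> + (\<theta> - hi) * q \<theta> * r \<theta> \<le> u hi"
    using assms unfolding admissible_def IC_def by auto
  moreover have "0 \<le> q \<theta>" "q \<theta> \<le> qbar" "0 \<le> r \<theta>" "r \<theta> \<le> 1"
    using assms by (auto simp: admissible_def is_mechanism_iff feasible_alloc_def)
  then have "q \<theta> * r \<theta> \<le> qbar" "0 \<le> q \<theta> * r \<theta>"
    using mult_left_le[of "r \<theta>" "q \<theta>"] by auto
  then have "(hi - \<theta>) * (q \<theta> * r \<theta>) \<le> (hi - lo) * qbar"
    using assms(2) by (intro mult_mono) auto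
  ultimately show ?thesis by (simp add: algebra_simps)
qed

lemma dominating_mix_exists:
  assumes concave: "concave_on {0<..} (V P)"
    and dom: "dominates P c lo hi qbar \<alpha> (r', q', u') (r, q, u)"
    and "\<alpha>' < \<alpha>" "\<alpha> < 1"
    and \<theta>1: "\<theta>1 \<in> {lo..hi}" "u \<theta>1 < u' \<theta>1"
  shows "\<exists>M. dominates P c lo hi qbar \<alpha>' M (r, q, u)"
proof -
  define D where "D \<theta> = u' \<theta> - u \<theta>" for \<theta>
  define B where "B = u' hi + (hi - lo) * qbar"
  have adm: "admissible lo hi qbar (r, q, u)" "admissible lo hi qbar (r', q', u')"
    and gain_\<alpha>: "\<And>\<theta>. \<theta> \<in> {lo..hi} \<Longrightarrow> (1 - \<alpha>) * D \<theta> \<le> r' \<theta> * TS P c \<theta> (q' \<theta>) - r \<theta> * TS P c \<theta> (q \<theta>)"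
    using dom by (auto simp: dominates_def RS_def D_def algebra_simps)
  have mech: "is_mechanism lo hi qbar (r, q, u)" "is_mechanism lo hi qbar (r', q', u')"
    using adm by (simp_all add: admissible_def)
  have D_le: "D \<theta> \<le> B" if "\<theta> \<in> {lo..hi}" for \<theta>
    using admissible_utility_le[OF adm(2) that] admissible_utility_nonneg[OF adm(1) that]
    by (simp add: D_def B_def)
  then have "0 < B" using D_le[OF \<theta>1(1)] \<theta>1(2) by (simp add: D_def)
  then obtain s h where h_subgrad: "\<And>x y. s x * (y - x) \<le> h y - h x"
    and h_nonneg: "\<And>x. 0 \<le> h x"
    and s_bounds: "\<And>x. x \<le> B \<Longrightarrow> 0 \<le> s x \<and> s x \<le> 1"
    and penalty: "\<And>x. (1 - \<alpha>') / (1 - \<alpha>) * h x \<le> s x * x"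
      "\<And>x. 0 < x \<Longrightarrow> (1 - \<alpha>') / (1 - \<alpha>) * h x < s x * x"
    by (rule convex_penalty_exists[where \<kappa> = "(1 - \<alpha>') / (1 - \<alpha>)"]) auto
  have excess: "(1 - \<alpha>') * h x \<le> (1 - \<alpha>) * (s x * x)"
    "0 < x \<Longrightarrow> (1 - \<alpha>') * h x < (1 - \<alpha>) * (s x * x)" for x
    using mult_left_mono[OF penalty(1)[of x], of "1 - \<alpha>"]
      mult_strict_left_mono[OF penalty(2)[of x], of "1 - \<alpha>"] \<open>\<alpha> < 1\<close> by auto
  define l where "l \<theta> = s (D \<theta>)" for \<theta>
  define w where "w \<theta> = u \<theta> + h (D \<theta>)" for \<theta>
  define M where "M = mix_mech l w (r, q, u) (r', q', u')"
  have l: "l \<theta> \<in> {0..1}" if "\<theta> \<in> {lo..hi}" for \<theta>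
    using s_bounds[OF D_le[OF that]] by (simp add: l_def)
  have "admissible lo hi qbar M"
    unfolding M_def
  proof (rule admissible_mix_mech[OF adm l])
    fix \<theta> \<theta>' assume "\<theta> \<in> {lo..hi}"
    then show "0 \<le> w \<theta>"
      using admissible_utility_nonneg[OF adm(1)] h_nonneg by (simp add: w_def add_nonneg_nonneg)
    show "(1 - l \<theta>') * (u \<theta> - u \<theta>') + l \<theta>' * (u' \<theta> - u' \<theta>') \<le> w \<theta> - w \<theta>'"
      using h_subgrad[of "D \<theta>'" "D \<theta>"] by (simp add: l_def w_def D_def algebra_simps)
  qed
  moreover have "(1 - \<alpha>) * (s (D \<theta>) * D \<theta>) - (1 - \<alpha>') * h (D \<theta>)
      \<le> RS P c \<alpha>' \<theta> M - RS P c \<alpha>' \<theta> (r, q, u)" if "\<theta> \<in> {lo..hi}" for \<theta>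
  proof -
    have "l \<theta> * ((1 - \<alpha>) * D \<theta>) \<le> l \<theta> * (r' \<theta> * TS P c \<theta> (q' \<theta>) - r \<theta> * TS P c \<theta> (q \<theta>))"
      using l[OF that] gain_\<alpha>[OF that] by (intro mult_left_mono) auto
    then show ?thesis
      using RS_mix_mech_ge[where l = l and \<theta> = \<theta> and c = c and \<beta> = \<alpha>' and w = w,
          OF concave mech l[OF that] that]
      by (simp add: M_def RS_def w_def l_def algebra_simps)
  qed
  ultimately have "dominates P c lo hi qbar \<alpha>' M (r, q, u)"
    using adm(1) \<theta>1 excess unfolding dominates_def D_def by (smt (verit, best))
  then show ?thesis ..
qed

theorem proposition1:
  fixes P :: "real \<Rightarrow> real" and c lo hi qbar \<alpha> \<alpha>' :: real
  assumes "0 < lo" "lo < hi" "c > 0" "qbar > 0"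
    and "continuous_on {0..} P"
    and "\<And>x y. 0 \<le> x \<Longrightarrow> x < y \<Longrightarrow> P y < P x"
    and "P qbar = 0"
    and A2: "\<exists>qh. 0 \<le> qh \<and> P qh = hi \<and> TS P c hi qh > 0"
    and "\<alpha> \<in> {0<..<1}" "\<alpha>' \<in> {0<..<1}" "\<alpha> > \<alpha>'"
  shows "{M. undominated P c lo hi qbar \<alpha>' M} \<subseteq> {M. undominated P c lo hi qbar \<alpha> M}"
proof
  have concave: "concave_on {0<..} (V P)" using assms(5,6) by (rule concave_on_V)
  fix M assume "M \<in> {M. undominated P c lo hi qbar \<alpha>' M}"
  then have und: "undominated P c lo hi qbar \<alpha>' M" by simp
  obtain r q u where M: "M = (r, q, u)" by (cases M)
  have "\<not> dominates P c lo hi qbar \<alpha> M' M" for M'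
  proof
    assume "dominates P c lo hi qbar \<alpha> M' M"
    moreover obtain r' q' u' where M': "M' = (r', q', u')" by (cases M')
    ultimately have dom: "dominates P c lo hi qbar \<alpha> (r', q', u') (r, q, u)" by (simp add: M)
    have "\<exists>M''. dominates P c lo hi qbar \<alpha>' M'' (r, q, u)"
    proof (cases "\<forall>\<theta>\<in>{lo..hi}. u' \<theta> \<le> u \<theta>")
      case True
      then have "dominates P c lo hi qbar \<alpha>' (r', q', u') (r, q, u)"
        using dominates_lower_weight[OF dom] assms(11) by simp
      then show ?thesis ..
    next
      case False
      then obtain \<theta>1 where "\<theta>1 \<in> {lo..hi}" "u \<theta>1 < u' \<theta>1" by auto
      then show ?thesis using dominating_mix_exists[OF concave dom assms(11)] assms(9) by simp
    qed
    then show False using und by (simp add: undominated_def M)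
  qed
  then show "M \<in> {M. undominated P c lo hi qbar \<alpha> M}"
    using und by (simp add: undominated_def)
qed

end
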